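(* Let $\Delta\ge0$, $\alpha,\beta\ge1$, let $\mathcal{D}$ be a distribution over valuation profiles $V$, and for each $V$ let $p^V_1,\dots,p^V_m$ be $(\alpha,\beta)$-balanced prices; let $b_j=\mathbb{E}_V[p^V_j]$. Suppose there exist two posted-pricing schemes obtaining expected welfare $\mathrm{ALG}_1$ and $\mathrm{ALG}_2$ respectively, such that $$\mathrm{ALG}_1\ge\alpha\,\mathbb{E}_V\Big[\sum_{j\in[m]}(p^V_j-e^{4\Delta}b_j)^+\Big]+\Big(\mathrm{OPT}-\alpha\sum_{j\in[m]}b_j\Big),$$ $$\mathrm{ALG}_2\ge\frac1\gamma\Big(\mathbb{E}_V\Big[\sum_{j\in[m]}\min\{p^V_j,e^{4\Delta}b_j\}\Big]-\epsilon\sum_{j\in[m]}b_j\Big)$$ for some $\gamma,\epsilon\ge0$. Then there exists a $\big(\frac{1+\alpha\gamma}{1-\epsilon\alpha\beta}\big)$-competitive posted-price mechanism.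
   Context: Online allocation: $m$ items, $n$ buyers arriving one by one with valuations $v_i:2^{[m]}\to\mathbb{R}_{\ge0}$, profile $V=(v_1,\dots,v_n)\sim\mathcal{D}$; each arriving buyer is irrevocably allocated a subset of remaining items; welfare is $\sum_i v_i(S_i)$. For each $V$, $O^V_1,\dots,O^V_n$ denotes a (fixed) welfare-maximizing allocation of disjoint item sets in hindsight, and $\mathrm{OPT}=\mathbb{E}_V[\sum_i v_i(O^V_i)]$. A posted-pricing scheme fixes (possibly random) item prices $p_1,\dots,p_m\ge0$, and each arriving buyer takes a utility-maximizing set $\arg\max_{S\subseteq\text{remaining}}(v_i(S)-\sum_{j\in S}p_j)$. A mechanism is $c$-competitive if its expected welfare is at least $\mathrm{OPT}/c$. Balanced prices: for a profile $V$ and $\alpha,\beta\ge1$, prices $p^V_1,\dots,p^V_m$ are $(\alpha,\beta)$-balanced if for every buyer $i$ and every $S\subseteq[m]$: (1) $\sum_{j\in O^V_i\setminus S}p^V_j\ge\frac1\alpha\big(v_i(O^V_i)-v_i(O^V_i\cap S)\big)$; (2) $\sum_{j\in O^V_i}p^V_j\le\beta\,v_i(O^V_i)$. *)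

theory Defs
  imports "HOL-Probability.Probability"
begin

(* Buyers are 0..<n (arriving in this order), items are 0..<m. *)

type_synonym valuation = "nat set \<Rightarrow> real"
type_synonym profile = "nat \<Rightarrow> valuation"
type_synonym allocation = "nat \<Rightarrow> nat set"
type_synonym prices = "nat \<Rightarrow> real"

definition valid_profile :: "nat \<Rightarrow> nat \<Rightarrow> profile \<Rightarrow> bool" where
  "valid_profile n m V \<longleftrightarrow> (\<forall>i<n. \<forall>S. S \<subseteq> {..<m} \<longrightarrow> V i S \<ge> 0)"

definition is_allocation :: "nat \<Rightarrow> nat \<Rightarrow> allocation \<Rightarrow> bool" where
  "is_allocation n m A \<longleftrightarrow> (\<forall>i<n. A i \<subseteq> {..<m}) \<and>
     (\<forall>i<n. \<forall>k<n. i \<noteq> k \<longrightarrow> A i \<inter> A k = {})"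

definition welfare :: "nat \<Rightarrow> profile \<Rightarrow> allocation \<Rightarrow> real" where
  "welfare n V A = (\<Sum>i<n. V i (A i))"

definition is_opt_alloc :: "nat \<Rightarrow> nat \<Rightarrow> profile \<Rightarrow> allocation \<Rightarrow> bool" where
  "is_opt_alloc n m V A \<longleftrightarrow> is_allocation n m A \<and>
     (\<forall>O'. is_allocation n m O' \<longrightarrow> welfare n V O' \<le> welfare n V A)"

definition balanced :: "nat \<Rightarrow> nat \<Rightarrow> real \<Rightarrow> real \<Rightarrow> profile \<Rightarrow> allocation \<Rightarrow> prices \<Rightarrow> bool" where
  "balanced n m \<alpha> \<beta> V A p \<longleftrightarrow>
     (\<forall>i<n. \<forall>S. S \<subseteq> {..<m} \<longrightarrow>
        (\<Sum>j\<in>A i - S. p j) \<ge> (1/\<alpha>) * (V i (A i) - V i (A i \<inter> S))) \<and>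
     (\<forall>i<n. (\<Sum>j\<in>A i. p j) \<le> \<beta> * V i (A i))"

(* a utility-maximising set among the remaining items R (fixed, arbitrary tie-breaking) *)
definition buyer_choice :: "valuation \<Rightarrow> prices \<Rightarrow> nat set \<Rightarrow> nat set" where
  "buyer_choice v p R = (SOME S. S \<subseteq> R \<and>
     (\<forall>T. T \<subseteq> R \<longrightarrow> v T - (\<Sum>j\<in>T. p j) \<le> v S - (\<Sum>j\<in>S. p j)))"

fun pp_run :: "valuation list \<Rightarrow> prices \<Rightarrow> nat set \<Rightarrow> real" where
  "pp_run [] p R = 0"
| "pp_run (v # vs) p R = (let S = buyer_choice v p R in v S + pp_run vs p (R - S))"

definition pp_welfare :: "nat \<Rightarrow> nat \<Rightarrow> profile \<Rightarrow> prices \<Rightarrow> real" where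
  "pp_welfare n m V p = pp_run (map V [0..<n]) p {..<m}"

(* a posted-pricing scheme: a distribution over nonnegative item prices, independent of V *)
definition pp_scheme :: "nat \<Rightarrow> prices pmf \<Rightarrow> bool" where
  "pp_scheme m P \<longleftrightarrow> (\<forall>p\<in>set_pmf P. \<forall>j<m. p j \<ge> 0)"

definition pp_exp_welfare :: "nat \<Rightarrow> nat \<Rightarrow> profile pmf \<Rightarrow> prices pmf \<Rightarrow> real" where
  "pp_exp_welfare n m D P =
     measure_pmf.expectation (pair_pmf P D) (\<lambda>(p, V). pp_welfare n m V p)"

end

theory Submission
  imports Defs
begin

text \<open>Splitting every price at the threshold \<open>e\<^sup>4\<^sup>\<Delta> b\<^sub>j\<close> into its excess and its truncation
  recovers the full price, so the two guarantees add up to \<open>OPT - \<alpha>\<epsilon> \<Sum>\<^sub>j b\<^sub>j\<close> for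
  \<open>ALG\<^sub>1 + \<alpha>\<gamma> ALG\<^sub>2\<close>. By the second balancedness condition the expected total price is at
  most \<open>\<beta> OPT\<close>, so \<open>ALG\<^sub>1 + \<alpha>\<gamma> ALG\<^sub>2 \<ge> (1 - \<epsilon>\<alpha>\<beta>) OPT\<close>, and the better of the two
  schemes is \<open>(1 + \<alpha>\<gamma>)/(1 - \<epsilon>\<alpha>\<beta>)\<close>-competitive.\<close>

lemma sum_prices_le_welfare:
  assumes "is_allocation n m A" and "(\<Union>i<n. A i) = {..<m}"
    and "balanced n m \<alpha> \<beta> V A p"
  shows "(\<Sum>j<m. p j) \<le> \<beta> * welfare n V A"
proof -
  have bundles: "A i \<subseteq> {..<m}" if "i < n" for i
    using assms(1) that unfolding is_allocation_def by blast
  have disjoint: "A i \<inter> A k = {}" if "i < n" "k < n" "i \<noteq> k" for i k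
    using assms(1) that unfolding is_allocation_def by blast
  have "(\<Sum>j<m. p j) = (\<Sum>j\<in>(\<Union>i<n. A i). p j)"
    using assms(2) by simp
  also have "\<dots> = (\<Sum>i<n. \<Sum>j\<in>A i. p j)"
    by (rule sum.UNION_disjoint) (auto intro: finite_subset[OF bundles] dest: disjoint)
  also have "\<dots> \<le> (\<Sum>i<n. \<beta> * V i (A i))"
    using assms(3) unfolding balanced_def by (intro sum_mono) auto
  also have "\<dots> = \<beta> * welfare n V A"
    unfolding welfare_def by (simp add: sum_distrib_left)
  finally show ?thesis .
qed

lemma expected_sum_prices_le_welfare:
  fixes D :: "profile pmf"
  assumes "\<forall>V\<in>set_pmf D. is_allocation n m (A V)"
    and "\<forall>V\<in>set_pmf D. (\<Union>i<n. A V i) = {..<m}"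
    and "integrable (measure_pmf D) (\<lambda>V. welfare n V (A V))"
    and "\<forall>V\<in>set_pmf D. balanced n m \<alpha> \<beta> V (A V) (p V)"
    and "\<forall>j<m. integrable (measure_pmf D) (\<lambda>V. p V j)"
  shows "(\<Sum>j<m. measure_pmf.expectation D (\<lambda>V. p V j))
           \<le> \<beta> * measure_pmf.expectation D (\<lambda>V. welfare n V (A V))"
proof -
  have "(\<Sum>j<m. measure_pmf.expectation D (\<lambda>V. p V j))
          = measure_pmf.expectation D (\<lambda>V. \<Sum>j<m. p V j)"
    using assms(5) by (intro Bochner_Integration.integral_sum[symmetric]) auto
  also have "\<dots> \<le> measure_pmf.expectation D (\<lambda>V. \<beta> * welfare n V (A V))"
    using assms sum_prices_le_welfare
    by (intro integral_mono_AE) (auto simp: AE_measure_pmf_iff)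
  also have "\<dots> = \<beta> * measure_pmf.expectation D (\<lambda>V. welfare n V (A V))"
    by simp
  finally show ?thesis .
qed

lemma (in prob_space) expectation_excess_plus_truncation:
  fixes f :: "'i \<Rightarrow> 'a \<Rightarrow> real"
  assumes "finite I" and "\<And>j. j \<in> I \<Longrightarrow> integrable M (f j)"
  shows "expectation (\<lambda>x. \<Sum>j\<in>I. max 0 (f j x - t j))
           + expectation (\<lambda>x. \<Sum>j\<in>I. min (f j x) (t j))
         = (\<Sum>j\<in>I. expectation (f j))"
proof -
  have pointwise: "(\<Sum>j\<in>I. max 0 (f j x - t j)) + (\<Sum>j\<in>I. min (f j x) (t j))
                     = (\<Sum>j\<in>I. f j x)" for x
    unfolding sum.distrib[symmetric] by (rule sum.cong) auto
  have "expectation (\<lambda>x. \<Sum>j\<in>I. max 0 (f j x - t j))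
          + expectation (\<lambda>x. \<Sum>j\<in>I. min (f j x) (t j))
        = expectation (\<lambda>x. (\<Sum>j\<in>I. max 0 (f j x - t j)) + (\<Sum>j\<in>I. min (f j x) (t j)))"
    using assms
    by (intro Bochner_Integration.integral_add[symmetric] Bochner_Integration.integrable_sum
        integrable_max integrable_min integrable_diff) auto
  also have "\<dots> = expectation (\<lambda>x. \<Sum>j\<in>I. f j x)"
    by (simp only: pointwise)
  also have "\<dots> = (\<Sum>j\<in>I. expectation (f j))"
    using assms by (intro Bochner_Integration.integral_sum) auto
  finally show ?thesis .
qed

lemma combined_guarantee:
  fixes ALG\<^sub>1 ALG\<^sub>2 OPT B excess trunc \<alpha> \<beta> \<gamma> \<epsilon> :: real
  assumes "\<alpha> \<ge> 0" and "\<epsilon> \<ge> 0"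
    and "ALG\<^sub>1 \<ge> \<alpha> * excess + (OPT - \<alpha> * B)"
    and "\<gamma> * ALG\<^sub>2 \<ge> trunc - \<epsilon> * B"
    and "excess + trunc = B" and "B \<le> \<beta> * OPT"
  shows "ALG\<^sub>1 + \<alpha> * \<gamma> * ALG\<^sub>2 \<ge> (1 - \<epsilon> * \<alpha> * \<beta>) * OPT"
proof -
  have "\<alpha> * (\<gamma> * ALG\<^sub>2) \<ge> \<alpha> * (trunc - \<epsilon> * B)"
    using assms(1,4) by (rule mult_left_mono[rotated])
  then have "ALG\<^sub>1 + \<alpha> * \<gamma> * ALG\<^sub>2 \<ge> OPT - \<alpha> * \<epsilon> * B"
    using assms(3) \<open>excess + trunc = B\<close>[THEN arg_cong[where f = "(*) \<alpha>"]]
    by (simp add: algebra_simps)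
  moreover have "\<alpha> * \<epsilon> * B \<le> \<alpha> * \<epsilon> * (\<beta> * OPT)"
    using assms(1,2,6) by (intro mult_left_mono) auto
  ultimately show ?thesis
    by (simp add: algebra_simps)
qed

lemma max_ge_weighted_average:
  fixes a b w x :: real
  assumes "w \<ge> 0" and "a + w * b \<ge> x"
  shows "max a b \<ge> x / (1 + w)"
proof -
  have "x \<le> (1 + w) * max a b"
    using assms mult_left_mono[OF max.cobounded2[of b a] assms(1)]
    by (simp add: algebra_simps)
  then show ?thesis
    using assms(1) by (simp add: divide_le_eq mult.commute)
qed

theorem lemma4p3:
  fixes n m :: nat and D :: "profile pmf" and Ostar :: "profile \<Rightarrow> allocation"
    and pr :: "profile \<Rightarrow> prices" and P1 P2 :: "prices pmf"
    and \<Delta> \<alpha> \<beta> \<gamma> \<epsilon> :: real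
  assumes "\<Delta> \<ge> 0" and "\<alpha> \<ge> 1" and "\<beta> \<ge> 1" and "\<gamma> \<ge> 0" and "\<epsilon> \<ge> 0"
    and "\<forall>V\<in>set_pmf D. valid_profile n m V"
    and "\<forall>V\<in>set_pmf D. is_opt_alloc n m V (Ostar V)"
    and "\<forall>V\<in>set_pmf D. (\<Union>i<n. Ostar V i) = {..<m}"
    and "integrable (measure_pmf D) (\<lambda>V. welfare n V (Ostar V))"
    and "\<forall>V\<in>set_pmf D. balanced n m \<alpha> \<beta> V (Ostar V) (pr V)"
    and "\<forall>j<m. integrable (measure_pmf D) (\<lambda>V. pr V j)"
    and "pp_scheme m P1" and "pp_scheme m P2"
    and "pp_exp_welfare n m D P1 \<ge>
           \<alpha> * measure_pmf.expectation D (\<lambda>V. \<Sum>j<m.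
              max 0 (pr V j - exp (4 * \<Delta>) * measure_pmf.expectation D (\<lambda>W. pr W j)))
         + (measure_pmf.expectation D (\<lambda>V. welfare n V (Ostar V))
            - \<alpha> * (\<Sum>j<m. measure_pmf.expectation D (\<lambda>W. pr W j)))"
    and "\<gamma> * pp_exp_welfare n m D P2 \<ge>
           (measure_pmf.expectation D (\<lambda>V. \<Sum>j<m.
              min (pr V j) (exp (4 * \<Delta>) * measure_pmf.expectation D (\<lambda>W. pr W j)))
            - \<epsilon> * (\<Sum>j<m. measure_pmf.expectation D (\<lambda>W. pr W j)))"
  shows "\<exists>P. pp_scheme m P \<and>
           pp_exp_welfare n m D P \<ge>
             measure_pmf.expectation D (\<lambda>V. welfare n V (Ostar V))
             / ((1 + \<alpha> * \<gamma>) / (1 - \<epsilon> * \<alpha> * \<beta>))"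
proof -
  let ?OPT = "measure_pmf.expectation D (\<lambda>V. welfare n V (Ostar V))"
  let ?ALG\<^sub>1 = "pp_exp_welfare n m D P1" and ?ALG\<^sub>2 = "pp_exp_welfare n m D P2"
  have "\<forall>V\<in>set_pmf D. is_allocation n m (Ostar V)"
    using assms(7) unfolding is_opt_alloc_def by blast
  then have "(\<Sum>j<m. measure_pmf.expectation D (\<lambda>W. pr W j)) \<le> \<beta> * ?OPT"
    using assms(8-11) by (rule expected_sum_prices_le_welfare)
  moreover have
    "measure_pmf.expectation D (\<lambda>V. \<Sum>j<m.
        max 0 (pr V j - exp (4 * \<Delta>) * measure_pmf.expectation D (\<lambda>W. pr W j)))
     + measure_pmf.expectation D (\<lambda>V. \<Sum>j<m.
        min (pr V j) (exp (4 * \<Delta>) * measure_pmf.expectation D (\<lambda>W. pr W j)))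
     = (\<Sum>j<m. measure_pmf.expectation D (\<lambda>W. pr W j))"
    using assms(11) by (intro measure_pmf.expectation_excess_plus_truncation) auto
  ultimately have "?ALG\<^sub>1 + \<alpha> * \<gamma> * ?ALG\<^sub>2 \<ge> (1 - \<epsilon> * \<alpha> * \<beta>) * ?OPT"
    using assms(2,5) by (intro combined_guarantee[OF _ _ assms(14,15)]) auto
  then have better: "max ?ALG\<^sub>1 ?ALG\<^sub>2 \<ge> (1 - \<epsilon> * \<alpha> * \<beta>) * ?OPT / (1 + \<alpha> * \<gamma>)"
    using assms(2,4) by (intro max_ge_weighted_average) auto
  have target: "?OPT / ((1 + \<alpha> * \<gamma>) / (1 - \<epsilon> * \<alpha> * \<beta>))
                  = (1 - \<epsilon> * \<alpha> * \<beta>) * ?OPT / (1 + \<alpha> * \<gamma>)"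
    by simp
  show ?thesis
    unfolding target using better assms(12,13) by (cases "?ALG\<^sub>1 \<le> ?ALG\<^sub>2") (auto simp: max_def)
qed

end
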